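(* For every process $Q$ there exist $k\ge 0$, processes $P_1,\ldots,P_k$, prefixes $\alpha_1,\ldots,\alpha_k$, a sequence of names $\vec c$, and sequences of names $\vec a_1,\ldots,\vec a_k$ (where $\vec c$ and each $\vec a_i$ may be empty) such that $$Q \equiv (\nu \vec c)\big((\vec a_1)\alpha_1.P_1 \mid (\vec a_2)\alpha_2.P_2 \mid \cdots \mid (\vec a_k)\alpha_k.P_k\big).$$
   Context: Let $\mathcal N$ be a countable set of names, ranged over by $a,b,c,x,y,z$. Processes are generated by $P,Q ::= 0 \mid P\mid Q \mid (\nu a)P \mid (a)P \mid \alpha.P$, where $(\nu a)P$ is name restriction (binding $a$), $(a)P$ is the authorization scope (meaning $P$ is authorized to act on channel $a$; here $a$ is not bound), and prefixes are $\alpha ::= \overline{a}\langle b\rangle$ (output of $b$ on $a$) $\mid a(x)$ (input on $a$, binding $x$ in the continuation) $\mid \overline{a}\langle\!\langle b\rangle\!\rangle$ (send the authorization for $b$ on $a$) $\mid a\langle\!\langle b\rangle\!\rangle$ (receive the authorization for $b$ on $a$; $b$ is not bound). $(\nu\vec c)P$ abbreviates $(\nu c_1)\cdots(\nu c_m)P$ and $(\vec a)P$ abbreviates $(a_1)\cdots(a_m)P$. Free names: $\mathrm{fn}(0)=\emptyset$, $\mathrm{fn}(P\mid Q)=\mathrm{fn}(P)\cup\mathrm{fn}(Q)$, $\mathrm{fn}((\nu a)P)=\mathrm{fn}(P)\setminus\{a\}$, $\mathrm{fn}((a)P)=\{a\}\cup\mathrm{fn}(P)$, $\mathrm{fn}(\overline{a}\langle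 b\rangle.P)=\mathrm{fn}(\overline{a}\langle\!\langle b\rangle\!\rangle.P)=\mathrm{fn}(a\langle\!\langle b\rangle\!\rangle.P)=\{a,b\}\cup\mathrm{fn}(P)$, $\mathrm{fn}(a(x).P)=\{a\}\cup(\mathrm{fn}(P)\setminus\{x\})$. Structural congruence $\equiv$ is the least congruence on processes satisfying: $P\mid 0\equiv P$; $P\mid Q\equiv Q\mid P$; $(P\mid Q)\mid R\equiv P\mid(Q\mid R)$; $(\nu a)0\equiv 0$; $(\nu a)(\nu b)P\equiv(\nu b)(\nu a)P$; $P\mid(\nu a)Q\equiv(\nu a)(P\mid Q)$ if $a\notin\mathrm{fn}(P)$; $P\equiv Q$ whenever $P$ and $Q$ are $\alpha$-convertible (renaming of bound names); $(a)(b)P\equiv(b)(a)P$; $(a)0\equiv 0$; $(a)(P\mid Q)\equiv(a)P\mid(a)Q$; $(a)(\nu b)P\equiv(\nu b)(a)P$ if $a\neq b$. An empty parallel composition ($k=0$) is read as $0$. *)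

theory Defs
  imports Main
begin

type_synonym name = nat

datatype prefix =
    Out name name      (* a<b> : output of b on a *)
  | Inp name name      (* a(x) : input on a, binds x in continuation *)
  | AOut name name     (* a<<b>> : send authorization for b on a *)
  | AInp name name     (* a<<b>> : receive authorization for b on a; b not bound *)

datatype proc =
    PNil
  | Par proc proc
  | Res name proc
  | Auth name proc     (* (a) P, a not bound *)
  | Pre prefix proc

fun fn :: "proc \<Rightarrow> name set" where
  "fn PNil = {}"
| "fn (Par P Q) = fn P \<union> fn Q"
| "fn (Res a P) = fn P - {a}"
| "fn (Auth a P) = {a} \<union> fn P"
| "fn (Pre (Out a b) P) = {a, b} \<union> fn P"
| "fn (Pre (AOut a b) P) = {a, b} \<union> fn P"
| "fn (Pre (AInp a b) P) = {a, b} \<union> fn P"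
| "fn (Pre (Inp a x) P) = {a} \<union> (fn P - {x})"

definition swapn :: "name \<Rightarrow> name \<Rightarrow> name \<Rightarrow> name" where
  "swapn a b c = (if c = a then b else if c = b then a else c)"

fun swap_pre :: "name \<Rightarrow> name \<Rightarrow> prefix \<Rightarrow> prefix" where
  "swap_pre a b (Out x y) = Out (swapn a b x) (swapn a b y)"
| "swap_pre a b (Inp x y) = Inp (swapn a b x) (swapn a b y)"
| "swap_pre a b (AOut x y) = AOut (swapn a b x) (swapn a b y)"
| "swap_pre a b (AInp x y) = AInp (swapn a b x) (swapn a b y)"

fun swap :: "name \<Rightarrow> name \<Rightarrow> proc \<Rightarrow> proc" where
  "swap a b PNil = PNil"
| "swap a b (Par P Q) = Par (swap a b P) (swap a b Q)"
| "swap a b (Res c P) = Res (swapn a b c) (swap a b P)"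
| "swap a b (Auth c P) = Auth (swapn a b c) (swap a b P)"
| "swap a b (Pre \<alpha> P) = Pre (swap_pre a b \<alpha>) (swap a b P)"

text \<open>Structural congruence: least congruence containing the axioms. Alpha-conversion
  is generated (under the congruence closure) by renaming a single binder to a fresh name.\<close>
inductive scong :: "proc \<Rightarrow> proc \<Rightarrow> bool" (infix "\<equiv>\<^sub>s" 50) where
  refl: "P \<equiv>\<^sub>s P"
| sym: "P \<equiv>\<^sub>s Q \<Longrightarrow> Q \<equiv>\<^sub>s P"
| trans: "P \<equiv>\<^sub>s Q \<Longrightarrow> Q \<equiv>\<^sub>s R \<Longrightarrow> P \<equiv>\<^sub>s R"
| cPar: "P \<equiv>\<^sub>s P' \<Longrightarrow> Q \<equiv>\<^sub>s Q' \<Longrightarrow> Par P Q \<equiv>\<^sub>s Par P' Q'"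
| cRes: "P \<equiv>\<^sub>s Q \<Longrightarrow> Res a P \<equiv>\<^sub>s Res a Q"
| cAuth: "P \<equiv>\<^sub>s Q \<Longrightarrow> Auth a P \<equiv>\<^sub>s Auth a Q"
| cPre: "P \<equiv>\<^sub>s Q \<Longrightarrow> Pre \<alpha> P \<equiv>\<^sub>s Pre \<alpha> Q"
| par_nil: "Par P PNil \<equiv>\<^sub>s P"
| par_comm: "Par P Q \<equiv>\<^sub>s Par Q P"
| par_assoc: "Par (Par P Q) R \<equiv>\<^sub>s Par P (Par Q R)"
| res_nil: "Res a PNil \<equiv>\<^sub>s PNil"
| res_res: "Res a (Res b P) \<equiv>\<^sub>s Res b (Res a P)"
| scope_ext: "a \<notin> fn P \<Longrightarrow> Par P (Res a Q) \<equiv>\<^sub>s Res a (Par P Q)"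
| alpha_res: "b \<notin> fn (Res a P) \<Longrightarrow> Res a P \<equiv>\<^sub>s Res b (swap a b P)"
| alpha_inp: "y \<notin> fn P - {x} \<Longrightarrow> Pre (Inp c x) P \<equiv>\<^sub>s Pre (Inp c y) (swap x y P)"
| auth_auth: "Auth a (Auth b P) \<equiv>\<^sub>s Auth b (Auth a P)"
| auth_nil: "Auth a PNil \<equiv>\<^sub>s PNil"
| auth_par: "Auth a (Par P Q) \<equiv>\<^sub>s Par (Auth a P) (Auth a Q)"
| auth_res: "a \<noteq> b \<Longrightarrow> Auth a (Res b P) \<equiv>\<^sub>s Res b (Auth a P)"

definition ress :: "name list \<Rightarrow> proc \<Rightarrow> proc" where
  "ress cs P = foldr Res cs P"

definition auths :: "name list \<Rightarrow> proc \<Rightarrow> proc" where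
  "auths as P = foldr Auth as P"

fun pars :: "proc list \<Rightarrow> proc" where
  "pars [] = PNil"
| "pars [P] = P"
| "pars (P # Ps) = Par P (pars Ps)"

end

theory Submission
  imports Defs
begin

text \<open>A restriction is first \<alpha>-renamed to a name outside a given
  finite set, so that the restricted names of one normal form never clash with the free names
  of a parallel sibling; scope extrusion and the law (a)(\<nu>b)P \<equiv> (\<nu>b)(a)P then float all
  restrictions to the top, and the distribution law (a)(P | Q) \<equiv> (a)P | (a)Q pushes every
  authorization down to the prefixed components. The invariant that the free names of the
  normal form are among those of the process is what makes the freshness conditions hold.\<close>

declare scong.trans[trans]

definition component :: "name list \<times> prefix \<times> proc \<Rightarrow> proc" where
  "component = (\<lambda>(as, \<alpha>, P). auths as (Pre \<alpha> P))"

definition normal_form :: "name list \<Rightarrow> (name list \<times> prefix \<times> proc) list \<Rightarrow> proc" where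
  "normal_form cs comps = ress cs (pars (map component comps))"

definition swap_component :: "name \<Rightarrow> name \<Rightarrow> name list \<times> prefix \<times> proc \<Rightarrow> name list \<times> prefix \<times> proc" where
  "swap_component a b = map_prod (map (swapn a b)) (map_prod (swap_pre a b) (swap a b))"

lemma finite_fn: "finite (fn P)"
proof (induction P)
  case (Pre \<alpha> P) then show ?case by (cases \<alpha>) auto
qed auto

lemma swapn_eq_iff: "swapn a b x = swapn a b y \<longleftrightarrow> x = y"
  by (auto simp: swapn_def)

lemma fn_swap: "fn (swap a b P) = swapn a b ` fn P"
proof (induction P)
  case (Pre \<alpha> P)
  then show ?case
    by (cases \<alpha>) (auto simp: swapn_eq_iff image_Un image_set_diff[OF injI])
qed (auto simp: swapn_eq_iff image_set_diff[OF injI])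

lemma fn_swap_fresh: "a \<notin> fn P \<Longrightarrow> b \<notin> fn P \<Longrightarrow> fn (swap a b P) = fn P"
  by (force simp: fn_swap swapn_def)

lemma fn_pars: "fn (pars Ps) = (\<Union>P\<in>set Ps. fn P)"
  by (induction Ps rule: pars.induct) auto

lemma fn_ress: "fn (ress cs P) = fn P - set cs"
  by (induction cs) (auto simp: ress_def)

lemma fn_auths: "fn (auths as P) = set as \<union> fn P"
  by (induction as) (auto simp: auths_def)

lemma swap_normal_form:
  "swap a b (normal_form cs comps) =
     normal_form (map (swapn a b) cs) (map (swap_component a b) comps)"
proof -
  have "swap a b (ress cs P) = ress (map (swapn a b) cs) (swap a b P)" for P
    by (induction cs) (auto simp: ress_def)
  moreover have "swap a b (pars Ps) = pars (map (swap a b) Ps)" for Ps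
    by (induction Ps rule: pars.induct) auto
  moreover have "swap a b (auths as P) = auths (map (swapn a b) as) (swap a b P)" for as P
    by (induction as) (auto simp: auths_def)
  ultimately show ?thesis
    by (simp add: normal_form_def component_def swap_component_def case_prod_beta comp_def)
qed

lemma ress_cong: "P \<equiv>\<^sub>s Q \<Longrightarrow> ress cs P \<equiv>\<^sub>s ress cs Q"
  by (induction cs) (auto simp: ress_def intro: scong.intros)

lemma pars_Cons: "pars (P # Ps) \<equiv>\<^sub>s Par P (pars Ps)"
  by (cases Ps) (auto intro: scong.intros)

lemma par_pars_append: "Par (pars Ps) (pars Qs) \<equiv>\<^sub>s pars (Ps @ Qs)"
proof (induction Ps)
  case Nil
  have "Par PNil (pars Qs) \<equiv>\<^sub>s Par (pars Qs) PNil" by (rule scong.par_comm)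
  also have "\<dots> \<equiv>\<^sub>s pars Qs" by (rule scong.par_nil)
  finally show ?case by simp
next
  case (Cons P Ps)
  have "Par (pars (P # Ps)) (pars Qs) \<equiv>\<^sub>s Par (Par P (pars Ps)) (pars Qs)"
    by (intro scong.cPar pars_Cons scong.refl)
  also have "\<dots> \<equiv>\<^sub>s Par P (Par (pars Ps) (pars Qs))" by (rule scong.par_assoc)
  also have "\<dots> \<equiv>\<^sub>s Par P (pars (Ps @ Qs))" using Cons by (intro scong.cPar scong.refl)
  also have "\<dots> \<equiv>\<^sub>s pars (P # Ps @ Qs)" by (rule scong.sym[OF pars_Cons])
  finally show ?case by simp
qed

lemma par_ress: "set cs \<inter> fn P = {} \<Longrightarrow> Par P (ress cs Q) \<equiv>\<^sub>s ress cs (Par P Q)"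
proof (induction cs)
  case (Cons c cs)
  then have "Par P (ress (c # cs) Q) \<equiv>\<^sub>s Res c (Par P (ress cs Q))"
    by (simp add: ress_def scong.scope_ext)
  also have "\<dots> \<equiv>\<^sub>s Res c (ress cs (Par P Q))" using Cons by (simp add: scong.cRes)
  finally show ?case by (simp add: ress_def)
qed (simp add: ress_def scong.refl)

lemma auth_ress: "a \<notin> set cs \<Longrightarrow> Auth a (ress cs P) \<equiv>\<^sub>s ress cs (Auth a P)"
proof (induction cs)
  case (Cons c cs)
  then have "Auth a (ress (c # cs) P) \<equiv>\<^sub>s Res c (Auth a (ress cs P))"
    by (simp add: ress_def scong.auth_res)
  also have "\<dots> \<equiv>\<^sub>s Res c (ress cs (Auth a P))" using Cons by (simp add: scong.cRes)
  finally show ?case by (simp add: ress_def)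
qed (simp add: ress_def scong.refl)

lemma auth_pars_components:
  "Auth a (pars (map component comps)) \<equiv>\<^sub>s pars (map component (map (apfst (Cons a)) comps))"
proof (induction comps)
  case Nil
  then show ?case by (simp add: scong.auth_nil)
next
  case (Cons x comps)
  let ?C = "map component comps" and ?C' = "map component (map (apfst (Cons a)) comps)"
  have "Auth a (pars (component x # ?C)) \<equiv>\<^sub>s Auth a (Par (component x) (pars ?C))"
    by (intro scong.cAuth pars_Cons)
  also have "\<dots> \<equiv>\<^sub>s Par (Auth a (component x)) (Auth a (pars ?C))" by (rule scong.auth_par)
  also have "\<dots> \<equiv>\<^sub>s Par (Auth a (component x)) (pars ?C')"
    using Cons by (intro scong.cPar scong.refl)
  also have "Auth a (component x) = component (apfst (Cons a) x)"
    by (cases x) (simp add: component_def auths_def)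
  also have "Par (component (apfst (Cons a) x)) (pars ?C') \<equiv>\<^sub>s pars (component (apfst (Cons a) x) # ?C')"
    by (rule scong.sym[OF pars_Cons])
  finally show ?case by simp
qed

lemma par_normal_form:
  assumes "set cs1 \<inter> fn (pars (map component comps2)) = {}"
    and "set cs2 \<inter> fn (normal_form cs1 comps1) = {}"
  shows "Par (normal_form cs1 comps1) (normal_form cs2 comps2) \<equiv>\<^sub>s
           normal_form (cs2 @ cs1) (comps2 @ comps1)"
proof -
  define N1 where "N1 = pars (map component comps1)"
  define N2 where "N2 = pars (map component comps2)"
  have "Par (ress cs1 N1) (ress cs2 N2) \<equiv>\<^sub>s ress cs2 (Par (ress cs1 N1) N2)"
    using assms(2) by (intro par_ress) (simp add: N1_def normal_form_def)
  also have "\<dots> \<equiv>\<^sub>s ress cs2 (Par N2 (ress cs1 N1))"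
    by (intro ress_cong scong.par_comm)
  also have "\<dots> \<equiv>\<^sub>s ress cs2 (ress cs1 (Par N2 N1))"
    using assms(1) by (intro ress_cong par_ress) (simp add: N2_def)
  also have "\<dots> \<equiv>\<^sub>s ress cs2 (ress cs1 (pars (map component (comps2 @ comps1))))"
    unfolding N1_def N2_def by (intro ress_cong) (simp add: par_pars_append)
  finally show ?thesis by (simp add: normal_form_def N1_def N2_def ress_def)
qed

lemma res_normal_form:
  assumes "a \<notin> set cs" "b \<notin> set cs" "b \<notin> fn (Res a (normal_form cs comps))"
  shows "Res a (normal_form cs comps) \<equiv>\<^sub>s normal_form (b # cs) (map (swap_component a b) comps)"
    and "fn (normal_form (b # cs) (map (swap_component a b) comps)) = fn (Res a (normal_form cs comps))"
proof -
  have "map (swapn a b) cs = cs"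
    using assms(1,2) by (intro map_idI) (auto simp: swapn_def)
  then have swapped: "normal_form (b # cs) (map (swap_component a b) comps) =
                      swap a b (Res a (normal_form cs comps))"
    using swap_normal_form[of a b cs comps] by (simp add: swapn_def normal_form_def ress_def)
  show "Res a (normal_form cs comps) \<equiv>\<^sub>s normal_form (b # cs) (map (swap_component a b) comps)"
    unfolding swapped using scong.alpha_res[OF assms(3)] by (simp add: swapn_def)
  show "fn (normal_form (b # cs) (map (swap_component a b) comps)) = fn (Res a (normal_form cs comps))"
    unfolding swapped using assms(3) by (intro fn_swap_fresh) auto
qed

lemma auth_normal_form:
  assumes "a \<notin> set cs"
  shows "Auth a (normal_form cs comps) \<equiv>\<^sub>s normal_form cs (map (apfst (Cons a)) comps)"
    and "fn (normal_form cs (map (apfst (Cons a)) comps)) \<subseteq> fn (Auth a (normal_form cs comps))"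
proof -
  have "Auth a (ress cs (pars (map component comps))) \<equiv>\<^sub>s ress cs (Auth a (pars (map component comps)))"
    using assms by (rule auth_ress)
  also have "\<dots> \<equiv>\<^sub>s ress cs (pars (map component (map (apfst (Cons a)) comps)))"
    by (intro ress_cong auth_pars_components)
  finally show "Auth a (normal_form cs comps) \<equiv>\<^sub>s normal_form cs (map (apfst (Cons a)) comps)"
    by (simp add: normal_form_def)
  show "fn (normal_form cs (map (apfst (Cons a)) comps)) \<subseteq> fn (Auth a (normal_form cs comps))"
    using assms by (auto simp: normal_form_def fn_ress fn_pars component_def fn_auths split: prod.splits)
qed

lemma normal_form_exists_fresh:
  assumes "finite F"
  shows "\<exists>cs comps. Q \<equiv>\<^sub>s normal_form cs comps \<and> set cs \<inter> F = {} \<and> fn (normal_form cs comps) \<subseteq> fn Q"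
  using assms
proof (induction Q arbitrary: F)
  case PNil
  show ?case
    by (intro exI[of _ "[]"]) (simp add: normal_form_def ress_def scong.refl)
next
  case (Pre \<alpha> P)
  have "Pre \<alpha> P \<equiv>\<^sub>s normal_form [] [([], \<alpha>, P)]"
    by (simp add: normal_form_def ress_def component_def auths_def scong.refl)
  then show ?case by (fastforce simp: normal_form_def ress_def component_def auths_def)
next
  case (Par Q1 Q2)
  obtain cs1 comps1 where nf1: "Q1 \<equiv>\<^sub>s normal_form cs1 comps1" "set cs1 \<inter> (F \<union> fn Q2) = {}"
      "fn (normal_form cs1 comps1) \<subseteq> fn Q1"
    using Par.IH(1)[of "F \<union> fn Q2"] Par.prems finite_fn by blast
  obtain cs2 comps2 where nf2: "Q2 \<equiv>\<^sub>s normal_form cs2 comps2" "set cs2 \<inter> (F \<union> fn Q1 \<union> set cs1) = {}"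
      "fn (normal_form cs2 comps2) \<subseteq> fn Q2"
    using Par.IH(2)[of "F \<union> fn Q1 \<union> set cs1"] Par.prems finite_fn by blast
  have "set cs1 \<inter> fn (pars (map component comps2)) = {}"
    using nf1(2) nf2(2,3) by (auto simp: normal_form_def fn_ress)
  moreover have "set cs2 \<inter> fn (normal_form cs1 comps1) = {}"
    using nf1(3) nf2(2) by auto
  ultimately have "Par Q1 Q2 \<equiv>\<^sub>s normal_form (cs2 @ cs1) (comps2 @ comps1)"
    using nf1(1) nf2(1) scong.cPar par_normal_form scong.trans by blast
  moreover have "fn (normal_form (cs2 @ cs1) (comps2 @ comps1)) \<subseteq> fn (Par Q1 Q2)"
    using nf1(3) nf2(3) by (auto simp: normal_form_def fn_ress fn_pars)
  ultimately show ?case using nf1(2) nf2(2) by (intro exI[of _ "cs2 @ cs1"]) auto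
next
  case (Res a Q)
  obtain cs comps where nf: "Q \<equiv>\<^sub>s normal_form cs comps" "set cs \<inter> (F \<union> {a}) = {}"
      "fn (normal_form cs comps) \<subseteq> fn Q"
    using Res.IH[of "F \<union> {a}"] Res.prems by blast
  obtain b where b: "b \<notin> F \<union> set cs \<union> fn (Res a Q)"
    using ex_new_if_finite[OF infinite_UNIV_nat] Res.prems finite_fn
    by (metis finite_Un finite_set)
  have "Res a Q \<equiv>\<^sub>s Res a (normal_form cs comps)" using nf(1) by (rule scong.cRes)
  moreover have fresh: "a \<notin> set cs" "b \<notin> set cs" "b \<notin> fn (Res a (normal_form cs comps))"
    using nf(2,3) b by auto
  ultimately show ?case
    using res_normal_form[OF fresh] nf(2,3) b
    by (intro exI[of _ "b # cs"] exI[of _ "map (swap_component a b) comps"])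
       (auto intro: scong.trans)
next
  case (Auth a Q)
  obtain cs comps where nf: "Q \<equiv>\<^sub>s normal_form cs comps" "set cs \<inter> (F \<union> {a}) = {}"
      "fn (normal_form cs comps) \<subseteq> fn Q"
    using Auth.IH[of "F \<union> {a}"] Auth.prems by blast
  have "Auth a Q \<equiv>\<^sub>s Auth a (normal_form cs comps)" using nf(1) by (rule scong.cAuth)
  moreover have "a \<notin> set cs" using nf(2) by auto
  ultimately show ?case
    using auth_normal_form[of a cs comps] nf(2,3)
    by (intro exI[of _ cs] exI[of _ "map (apfst (Cons a)) comps"])
       (auto intro: scong.trans)
qed

theorem mainTheorem1:
  fixes Q :: proc
  shows "\<exists>(cs :: name list) (comps :: (name list \<times> prefix \<times> proc) list).
           Q \<equiv>\<^sub>s ress cs (pars (map (\<lambda>(as, \<alpha>, P). auths as (Pre \<alpha> P)) comps))"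
  using normal_form_exists_fresh[of "{}" Q] unfolding normal_form_def component_def by auto

end
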